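(* Let $L\ge K>0$, $m\ge 1$, $d\ge 1$. For an $L$-layer MinAgg GNN $\mathcal A_\theta$ with hidden dimension $d$ and $m$-layer aggregation and update MLPs, there is an assignment of the parameters $\theta$ with exactly $mL+mK+K$ nonzero entries (all biases zero) such that $\mathcal A_\theta(G)=\Gamma^K(G)$ for every $G\in\mathscr G$, i.e. $h^{(L)}_v(G)=x_v(\Gamma^K(G))$ for all $v\in V(G)$.
   Context: Attributed graphs: $G=(V,E,X_{\mathrm v},X_{\mathrm e})$ with $V$ finite, $E$ a set of undirected edges, nonnegative edge weights $x_{(u,v)}=x_{(v,u)}\ge 0$ and nonnegative real node features $x_v$. Every node carries a self-loop of weight $x_{(v,v)}=0$, and $\mathcal N(v)=\{v\}\cup\{u:\{u,v\}\in E\}$. A constant $\beta>0$ is fixed; $\mathscr G$ is the set of attributed graphs with $\sum_{e\in E}x_e<\beta$. $x_v(H)$ is the feature of $v$ in $H$. The Bellman–Ford operator $\Gamma$ sends $G$ to the graph with the same vertices, edges and edge weights and node features $x'_v=\min\{x_u+x_{(u,v)}:u\in\mathcal N(v)\}$; $\Gamma^K$ is its $K$-fold iterate. An $m$-layer ReLU MLP $f:\mathbb R^{n_0}\to\mathbb R^{n_m}$ has parameters $W_j\in\mathbb R^{n_j\times n_{j-1}}$, $b_j\in\mathbb R^{n_j}$ ($j\in[m]$) and computes $x^{(0)}=x$, $x^{(j)}=\sigma(W_jx^{(j-1)}+b_j)$, $f(x)=x^{(m)}$, where $\sigma$ is componentwise ReLU. MinAgg GNN: an $L$-layer MinAgg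 GNN $\mathcal A_\theta$ with hidden dimension $d$ and $m$-layer MLPs consists, for each $\ell\in[L]$, of $m$-layer ReLU MLPs $f^{\mathrm{agg},(\ell)}:\mathbb R^{d_{\ell-1}+1}\to\mathbb R^d$ and $f^{\mathrm{up},(\ell)}:\mathbb R^{d+d_{\ell-1}}\to\mathbb R^{d_\ell}$ (internal widths $d$), where $d_0=d_L=1$ and $d_\ell=d$ for $0<\ell<L$. On input $G$: $h^{(0)}_v=x_v$ and $$h^{(\ell)}_v=f^{\mathrm{up},(\ell)}\Big(\min_{u\in\mathcal N(v)}f^{\mathrm{agg},(\ell)}\big(h^{(\ell-1)}_u\oplus x_{(u,v)}\big)\oplus h^{(\ell-1)}_v\Big),$$ with $\min$ taken coordinatewise and $\oplus$ concatenation. The output $\mathcal A_\theta(G)$ is $G$ with node features replaced by $h^{(L)}_v$. $\theta$ is the collection of all weight and bias entries of all these MLPs. *)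

theory Defs
  imports Complex_Main
begin

text \<open>Vertices are natural numbers (every finite graph is isomorphic to one on nat).
  Undirected edges are 2-element sets {u,v}, u \<noteq> v. ew gives edge weights,
  nf gives (scalar) node features.\<close>

record agraph =
  verts :: "nat set"
  edges :: "nat set set"
  ew    :: "nat set \<Rightarrow> real"
  nf    :: "nat \<Rightarrow> real"

definition edge_w :: "agraph \<Rightarrow> nat \<Rightarrow> nat \<Rightarrow> real" where
  "edge_w G u v = (if u = v then 0 else ew G {u, v})"

definition nbhd :: "agraph \<Rightarrow> nat \<Rightarrow> nat set" where
  "nbhd G v = {v} \<union> {u. {u, v} \<in> edges G}"

definition in_graph_class :: "real \<Rightarrow> agraph \<Rightarrow> bool" where
  "in_graph_class \<beta> G \<longleftrightarrow>
     finite (verts G) \<and>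
     (\<forall>e\<in>edges G. \<exists>u v. e = {u, v} \<and> u \<noteq> v \<and> u \<in> verts G \<and> v \<in> verts G) \<and>
     (\<forall>e\<in>edges G. ew G e \<ge> 0) \<and>
     (\<forall>v\<in>verts G. nf G v \<ge> 0) \<and>
     (\<Sum>e\<in>edges G. ew G e) < \<beta>"

definition bf_step :: "agraph \<Rightarrow> agraph" where
  "bf_step G = G\<lparr> nf := (\<lambda>v. Min ((\<lambda>u. nf G u + edge_w G u v) ` nbhd G v)) \<rparr>"

text \<open>A layer is (W, b), W given as list of rows. Vectors are real lists.\<close>
type_synonym layer = "real list list \<times> real list"

definition relu :: "real \<Rightarrow> real" where
  "relu t = max 0 t"

definition layer_apply :: "layer \<Rightarrow> real list \<Rightarrow> real list" where
  "layer_apply Wb x = map2 (\<lambda>row bi. relu (sum_list (map2 (*) row x) + bi)) (fst Wb) (snd Wb)"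

definition mlp_apply :: "layer list \<Rightarrow> real list \<Rightarrow> real list" where
  "mlp_apply ls x = foldl (\<lambda>y l. layer_apply l y) x ls"

definition mlp_shape :: "nat \<Rightarrow> nat \<Rightarrow> nat \<Rightarrow> nat \<Rightarrow> layer list \<Rightarrow> bool" where
  "mlp_shape n0 d nout m ls \<longleftrightarrow> length ls = m \<and>
     (\<forall>j<m. let W = fst (ls ! j); b = snd (ls ! j);
                 ni = (if j = 0 then n0 else d); no = (if j = m - 1 then nout else d)
             in length W = no \<and> length b = no \<and> (\<forall>row\<in>set W. length row = ni))"

definition layer_nnz :: "layer \<Rightarrow> nat" where
  "layer_nnz Wb = sum_list (map (\<lambda>row. length (filter (\<lambda>t. t \<noteq> 0) row)) (fst Wb))
                  + length (filter (\<lambda>t. t \<noteq> 0) (snd Wb))"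

definition mlp_nnz :: "layer list \<Rightarrow> nat" where
  "mlp_nnz ls = sum_list (map layer_nnz ls)"

definition mlp_biases_zero :: "layer list \<Rightarrow> bool" where
  "mlp_biases_zero ls \<longleftrightarrow> (\<forall>l\<in>set ls. \<forall>t\<in>set (snd l). t = 0)"

text \<open>Parameters: for each layer (0-based index \<ell>), the pair (f_agg, f_up).\<close>
type_synonym gnn_params = "(layer list \<times> layer list) list"

definition gnn_shape :: "nat \<Rightarrow> nat \<Rightarrow> nat \<Rightarrow> gnn_params \<Rightarrow> bool" where
  "gnn_shape L d m \<theta> \<longleftrightarrow> length \<theta> = L \<and>
     (\<forall>l<L. let din = (if l = 0 then 1 else d); dout = (if l = L - 1 then 1 else d)
            in mlp_shape (din + 1) d d m (fst (\<theta> ! l)) \<and>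
               mlp_shape (d + din) d dout m (snd (\<theta> ! l)))"

definition gnn_nnz :: "gnn_params \<Rightarrow> nat" where
  "gnn_nnz \<theta> = sum_list (map (\<lambda>p. mlp_nnz (fst p) + mlp_nnz (snd p)) \<theta>)"

definition gnn_biases_zero :: "gnn_params \<Rightarrow> bool" where
  "gnn_biases_zero \<theta> \<longleftrightarrow> (\<forall>p\<in>set \<theta>. mlp_biases_zero (fst p) \<and> mlp_biases_zero (snd p))"

definition gnn_layer :: "nat \<Rightarrow> agraph \<Rightarrow> layer list \<times> layer list
                          \<Rightarrow> (nat \<Rightarrow> real list) \<Rightarrow> (nat \<Rightarrow> real list)" where
  "gnn_layer d G p h = (\<lambda>v.
     mlp_apply (snd p)
       (map (\<lambda>i. Min ((\<lambda>u. mlp_apply (fst p) (h u @ [edge_w G u v]) ! i) ` nbhd G v)) [0..<d]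
        @ h v))"

definition gnn_eval :: "nat \<Rightarrow> agraph \<Rightarrow> gnn_params \<Rightarrow> nat \<Rightarrow> real list" where
  "gnn_eval d G \<theta> = foldl (\<lambda>h p. gnn_layer d G p h) (\<lambda>v. [nf G v]) \<theta>"

end

(* Each of the first K layers performs one Bellman-Ford relaxation, the remaining ones copy the
   node feature. Every MLP carries a single scalar in coordinate 0 of its activations: its first
   layer applies one weight row and each later layer copies coordinate 0 with one unit weight.
   In a relaxation layer the aggregation row (1, 0, ..., 0, 1) computes h_u + x_(u,v), the
   coordinatewise minimum performs the relaxation and the update row e_0 reads it off; a copy
   layer has a zero aggregation MLP and the update row e_d, which selects h_v behind the d
   aggregated coordinates. Features and weights are nonnegative, so every ReLU is the identity.
   A relaxation layer costs (m + 1) + m nonzero weights and a copy layer m, giving mL + mK + K. *)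

theory Submission
  imports Defs
begin

abbreviation dot :: "real list \<Rightarrow> real list \<Rightarrow> real" where
  "dot r x \<equiv> sum_list (map2 (*) r x)"

abbreviation nnz :: "real list \<Rightarrow> nat" where
  "nnz r \<equiv> length (filter (\<lambda>t. t \<noteq> 0) r)"

definition lead_vec :: "nat \<Rightarrow> real \<Rightarrow> real list" where
  "lead_vec n a = a # replicate (n - 1) 0"

definition unit_vec :: "nat \<Rightarrow> nat \<Rightarrow> real list" where
  "unit_vec n i = replicate i 0 @ 1 # replicate (n - i - 1) 0"

lemma length_lead_vec [simp]: "1 \<le> n \<Longrightarrow> length (lead_vec n a) = n"
  by (simp add: lead_vec_def)

lemma nth_lead_vec: "i < n \<Longrightarrow> lead_vec n a ! i = (if i = 0 then a else 0)"
  by (cases i) (auto simp: lead_vec_def)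

lemma length_unit_vec [simp]: "i < n \<Longrightarrow> length (unit_vec n i) = n"
  by (simp add: unit_vec_def)

lemma dot_replicate_zero [simp]: "dot (replicate n 0) x = 0"
proof (induction n arbitrary: x)
  case (Suc n)
  then show ?case by (cases x) auto
qed simp

lemma dot_unit_vec:
  assumes "i < length x"
  shows "dot (unit_vec n i) x = x ! i"
proof -
  have "dot (replicate i 0 @ 1 # replicate k 0) x = x ! i" for k
    using assms
  proof (induction i arbitrary: x)
    case 0
    then show ?case by (cases x) auto
  next
    case (Suc i)
    then show ?case by (cases x) auto
  qed
  then show ?thesis by (simp add: unit_vec_def)
qed

lemma dot_unit_vec_lead_vec [simp]: "1 \<le> n \<Longrightarrow> dot (unit_vec n 0) (lead_vec n a) = a"
  by (simp add: dot_unit_vec nth_lead_vec)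

lemma dot_lead_vec [simp]: "dot (lead_vec n c) (lead_vec n a) = c * a"
  by (simp add: lead_vec_def zip_replicate sum_list_replicate)

lemma nnz_lead_vec_one [simp]: "nnz (lead_vec n 1) = 1"
  by (simp add: lead_vec_def filter_replicate)

lemma nnz_unit_vec [simp]: "nnz (unit_vec n i) = 1"
  by (simp add: unit_vec_def filter_replicate)

lemma relu_nonneg [simp]: "0 \<le> relu t"
  by (simp add: relu_def)

lemma relu_eq_self [simp]: "0 \<le> t \<Longrightarrow> relu t = t"
  by (simp add: relu_def)

definition row_layer :: "nat \<Rightarrow> real list \<Rightarrow> layer" where
  "row_layer no r = (r # replicate (no - 1) (replicate (length r) 0), replicate no 0)"

definition chain_mlp :: "nat \<Rightarrow> nat \<Rightarrow> nat \<Rightarrow> real list \<Rightarrow> layer list" where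
  "chain_mlp d nout m r =
     map (\<lambda>j. row_layer (if j = m - 1 then nout else d) (if j = 0 then r else unit_vec d 0)) [0..<m]"

definition zero_mlp :: "nat \<Rightarrow> nat \<Rightarrow> nat \<Rightarrow> nat \<Rightarrow> layer list" where
  "zero_mlp n0 d nout m =
     map (\<lambda>j. let ni = (if j = 0 then n0 else d); no = (if j = m - 1 then nout else d)
             in (replicate no (replicate ni 0), replicate no 0)) [0..<m]"

lemma layer_apply_row_layer:
  "1 \<le> no \<Longrightarrow> layer_apply (row_layer no r) x = lead_vec no (relu (dot r x))"
  by (cases no) (simp_all add: layer_apply_def row_layer_def lead_vec_def relu_def)

lemma mlp_apply_chain_mlp:
  assumes "1 \<le> m" "1 \<le> d" "1 \<le> nout"
  shows "mlp_apply (chain_mlp d nout m r) x = lead_vec nout (relu (dot r x))"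
proof -
  define a where "a = relu (dot r x)"
  define no where "no = (\<lambda>j. if j = m - 1 then nout else d)"
  define f where "f = (\<lambda>j. row_layer (no j) (if j = 0 then r else unit_vec d 0))"
  have no_pos: "1 \<le> no j" for j
    using assms by (simp add: no_def)
  have "k < m \<Longrightarrow> foldl (\<lambda>y l. layer_apply l y) x (map f [0..<Suc k]) = lead_vec (no k) a" for k
  proof (induction k)
    case 0
    show ?case by (simp add: f_def a_def layer_apply_row_layer[OF no_pos])
  next
    case (Suc k)
    from Suc.prems have "no k = d" unfolding no_def by auto
    with Suc have "foldl (\<lambda>y l. layer_apply l y) x (map f [0..<Suc (Suc k)])
        = layer_apply (f (Suc k)) (lead_vec d a)"
      by simp
    also have "\<dots> = lead_vec (no (Suc k)) a"
      using assms by (simp add: f_def layer_apply_row_layer[OF no_pos] a_def)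
    finally show ?case .
  qed
  moreover obtain k where "m = Suc k"
    using assms by (cases m) auto
  moreover have "chain_mlp d nout m r = map f [0..<m]"
    by (simp add: chain_mlp_def f_def no_def)
  ultimately show ?thesis
    by (simp add: mlp_apply_def no_def a_def del: upt_Suc)
qed

lemma layer_nnz_row_layer [simp]: "layer_nnz (row_layer no r) = nnz r"
  by (simp add: layer_nnz_def row_layer_def filter_replicate sum_list_replicate)

lemma mlp_nnz_chain_mlp:
  assumes "1 \<le> m"
  shows "mlp_nnz (chain_mlp d nout m r) = nnz r + (m - 1)"
proof -
  have "[0..<m] = 0 # [1..<m]"
    using assms by (simp add: upt_conv_Cons)
  moreover have "(\<Sum>j\<leftarrow>[1..<m]. nnz (if j = 0 then r else unit_vec d 0)) = m - 1"
    by (subst map_cong[OF refl, where g = "\<lambda>_. 1"]) (auto simp: sum_list_triv)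
  ultimately show ?thesis
    by (simp add: mlp_nnz_def chain_mlp_def comp_def sum_list_triv)
qed

lemma mlp_nnz_zero_mlp: "mlp_nnz (zero_mlp n0 d nout m) = 0"
  by (simp add: mlp_nnz_def zero_mlp_def layer_nnz_def filter_replicate comp_def Let_def)

lemma mlp_biases_zero_chain_mlp: "mlp_biases_zero (chain_mlp d nout m r)"
  by (auto simp: mlp_biases_zero_def chain_mlp_def row_layer_def)

lemma mlp_biases_zero_zero_mlp: "mlp_biases_zero (zero_mlp n0 d nout m)"
  by (auto simp: mlp_biases_zero_def zero_mlp_def Let_def)

lemma mlp_shape_chain_mlp:
  "length r = n0 \<Longrightarrow> 1 \<le> d \<Longrightarrow> 1 \<le> nout \<Longrightarrow> mlp_shape n0 d nout m (chain_mlp d nout m r)"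
  by (auto simp: mlp_shape_def chain_mlp_def row_layer_def unit_vec_def Let_def)

lemma mlp_shape_zero_mlp: "mlp_shape n0 d nout m (zero_mlp n0 d nout m)"
  by (auto simp: mlp_shape_def zero_mlp_def Let_def)

lemma nbhd_nonempty [simp]: "nbhd G v \<noteq> {}"
  by (simp add: nbhd_def)

lemma nbhd_subset_verts:
  assumes "in_graph_class \<beta> G" "v \<in> verts G"
  shows "nbhd G v \<subseteq> verts G"
proof
  fix u assume "u \<in> nbhd G v"
  then consider "u = v" | "{u, v} \<in> edges G"
    by (auto simp: nbhd_def)
  then show "u \<in> verts G"
  proof cases
    case 2
    then obtain a b where "{u, v} = {a, b}" "a \<in> verts G" "b \<in> verts G"
      using assms(1) unfolding in_graph_class_def by blast
    then show ?thesis by (auto simp: doubleton_eq_iff)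
  qed (use assms in simp)
qed

lemma finite_nbhd: "in_graph_class \<beta> G \<Longrightarrow> v \<in> verts G \<Longrightarrow> finite (nbhd G v)"
  using nbhd_subset_verts finite_subset in_graph_class_def by metis

lemma edge_w_nonneg: "in_graph_class \<beta> G \<Longrightarrow> u \<in> nbhd G v \<Longrightarrow> 0 \<le> edge_w G u v"
  by (auto simp: edge_w_def nbhd_def in_graph_class_def)

lemma bf_step_power_simps [simp]:
  "verts ((bf_step ^^ k) G) = verts G"
  "edges ((bf_step ^^ k) G) = edges G"
  "ew ((bf_step ^^ k) G) = ew G"
  by (induction k) (simp_all add: bf_step_def)

lemma nf_bf_step_power_Suc:
  "nf ((bf_step ^^ Suc k) G) v = Min ((\<lambda>u. nf ((bf_step ^^ k) G) u + edge_w G u v) ` nbhd G v)"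
proof -
  have "nbhd ((bf_step ^^ k) G) = nbhd G" "edge_w ((bf_step ^^ k) G) = edge_w G"
    by (simp_all add: nbhd_def edge_w_def fun_eq_iff)
  then show ?thesis by (simp add: bf_step_def)
qed

lemma nf_bf_step_power_nonneg:
  assumes "in_graph_class \<beta> G" "v \<in> verts G"
  shows "0 \<le> nf ((bf_step ^^ k) G) v"
  using assms(2)
proof (induction k arbitrary: v)
  case 0
  then show ?case using assms(1) by (simp add: in_graph_class_def)
next
  case (Suc k)
  have "0 \<le> nf ((bf_step ^^ k) G) u + edge_w G u v" if "u \<in> nbhd G v" for u
    using Suc nbhd_subset_verts[OF assms(1)] edge_w_nonneg[OF assms(1)] that
    by (meson add_nonneg_nonneg subsetD)
  moreover have "finite (nbhd G v)"
    using finite_nbhd[OF assms(1) Suc.prems] .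
  ultimately show ?case
    unfolding nf_bf_step_power_Suc by (simp add: Min_ge_iff)
qed

lemma gnn_layer_relax:
  assumes "finite (nbhd G v)"
    and h: "\<And>u. u \<in> nbhd G v \<Longrightarrow> h u = lead_vec dn (a u)"
    and nonneg: "\<And>u. u \<in> nbhd G v \<Longrightarrow> 0 \<le> a u + edge_w G u v"
    and "1 \<le> dn" "1 \<le> d" "1 \<le> m" "1 \<le> no"
  shows "gnn_layer d G (chain_mlp d d m (lead_vec dn 1 @ [1]), chain_mlp d no m (unit_vec (d + dn) 0)) h v
           = lead_vec no (Min ((\<lambda>u. a u + edge_w G u v) ` nbhd G v))"
proof -
  let ?agg = "chain_mlp d d m (lead_vec dn 1 @ [1])"
  define M where "M = Min ((\<lambda>u. a u + edge_w G u v) ` nbhd G v)"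
  have agg: "mlp_apply ?agg (h u @ [edge_w G u v]) ! 0 = a u + edge_w G u v" if "u \<in> nbhd G v" for u
    using assms that by (simp add: mlp_apply_chain_mlp nth_lead_vec)
  have "0 \<le> M"
    using assms(1) nonneg by (simp add: M_def Min_ge_iff)
  moreover have "Min ((\<lambda>u. mlp_apply ?agg (h u @ [edge_w G u v]) ! 0) ` nbhd G v) = M"
    unfolding M_def using agg by (metis (no_types, lifting) image_cong)
  ultimately show ?thesis
    using assms by (simp add: gnn_layer_def mlp_apply_chain_mlp dot_unit_vec nth_append M_def)
qed

lemma gnn_layer_copy:
  assumes "h v = lead_vec dn a" "0 \<le> a" "1 \<le> dn" "1 \<le> d" "1 \<le> m" "1 \<le> no"
  shows "gnn_layer d G (zero_mlp n0 d d m, chain_mlp d no m (unit_vec (d + dn) d)) h v = lead_vec no a"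
  using assms by (simp add: gnn_layer_def mlp_apply_chain_mlp dot_unit_vec nth_append nth_lead_vec)

definition bf_gnn_width :: "nat \<Rightarrow> nat \<Rightarrow> nat \<Rightarrow> nat" where
  "bf_gnn_width L d l = (if l = 0 \<or> l = L then 1 else d)"

definition bf_gnn_layer :: "nat \<Rightarrow> nat \<Rightarrow> nat \<Rightarrow> nat \<Rightarrow> nat \<Rightarrow> layer list \<times> layer list" where
  "bf_gnn_layer L K d m l =
     (let din = bf_gnn_width L d l; dout = bf_gnn_width L d (Suc l)
      in if l < K
         then (chain_mlp d d m (lead_vec din 1 @ [1]), chain_mlp d dout m (unit_vec (d + din) 0))
         else (zero_mlp (din + 1) d d m, chain_mlp d dout m (unit_vec (d + din) d)))"

definition bf_gnn :: "nat \<Rightarrow> nat \<Rightarrow> nat \<Rightarrow> nat \<Rightarrow> gnn_params" where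
  "bf_gnn L K d m = map (bf_gnn_layer L K d m) [0..<L]"

lemma gnn_shape_bf_gnn: "1 \<le> d \<Longrightarrow> gnn_shape L d m (bf_gnn L K d m)"
  by (auto simp: gnn_shape_def bf_gnn_def bf_gnn_layer_def bf_gnn_width_def Let_def
      intro!: mlp_shape_chain_mlp mlp_shape_zero_mlp)

lemma gnn_biases_zero_bf_gnn: "gnn_biases_zero (bf_gnn L K d m)"
  by (auto simp: gnn_biases_zero_def bf_gnn_def bf_gnn_layer_def Let_def
      mlp_biases_zero_chain_mlp mlp_biases_zero_zero_mlp)

lemma mlp_nnz_bf_gnn_layer:
  "1 \<le> m \<Longrightarrow> mlp_nnz (fst (bf_gnn_layer L K d m l)) + mlp_nnz (snd (bf_gnn_layer L K d m l))
     = m + (if l < K then m + 1 else 0)"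
  by (simp add: bf_gnn_layer_def Let_def mlp_nnz_chain_mlp mlp_nnz_zero_mlp)

lemma gnn_nnz_bf_gnn:
  assumes "K \<le> L" "1 \<le> m"
  shows "gnn_nnz (bf_gnn L K d m) = m * L + m * K + K"
proof -
  have "gnn_nnz (bf_gnn L K d m) = (\<Sum>l<L. m + (if l < K then m + 1 else 0))"
    using assms(2)
    by (simp add: gnn_nnz_def bf_gnn_def comp_def mlp_nnz_bf_gnn_layer atLeast0LessThan
        sum_set_upt_conv_sum_list_nat[symmetric])
  also have "\<dots> = m * L + (m + 1) * K"
  proof -
    have "{..<L} \<inter> {l. l < K} = {..<K}"
      using assms(1) by auto
    then show ?thesis by (simp add: sum.distrib sum.If_cases)
  qed
  finally show ?thesis by (simp add: algebra_simps)
qed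

lemma gnn_layer_bf_gnn_layer:
  assumes G: "in_graph_class \<beta> G" and v: "v \<in> verts G" and "1 \<le> d" "1 \<le> m"
    and h: "\<And>u. u \<in> verts G \<Longrightarrow> h u = lead_vec (bf_gnn_width L d n) (nf ((bf_step ^^ min n K) G) u)"
  shows "gnn_layer d G (bf_gnn_layer L K d m n) h v
           = lead_vec (bf_gnn_width L d (Suc n)) (nf ((bf_step ^^ min (Suc n) K) G) v)"
proof -
  define a where "a u = nf ((bf_step ^^ min n K) G) u" for u
  have widths: "1 \<le> bf_gnn_width L d n" "1 \<le> bf_gnn_width L d (Suc n)"
    using assms(3) by (simp_all add: bf_gnn_width_def)
  show ?thesis
  proof (cases "n < K")
    case True
    have in_verts: "nbhd G v \<subseteq> verts G"
      using nbhd_subset_verts[OF G v] .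
    have h_nbhd: "h u = lead_vec (bf_gnn_width L d n) (a u)" if "u \<in> nbhd G v" for u
      using h that in_verts by (auto simp: a_def)
    have nonneg: "0 \<le> a u + edge_w G u v" if "u \<in> nbhd G v" for u
      using that in_verts edge_w_nonneg[OF G] nf_bf_step_power_nonneg[OF G] by (auto simp: a_def)
    have "gnn_layer d G (bf_gnn_layer L K d m n) h v
        = lead_vec (bf_gnn_width L d (Suc n)) (Min ((\<lambda>u. a u + edge_w G u v) ` nbhd G v))"
      using True gnn_layer_relax[OF finite_nbhd[OF G v] h_nbhd nonneg widths(1) assms(3,4) widths(2)]
      by (simp add: bf_gnn_layer_def Let_def)
    also have "\<dots> = lead_vec (bf_gnn_width L d (Suc n)) (nf ((bf_step ^^ min (Suc n) K) G) v)"
      using True by (simp add: a_def nf_bf_step_power_Suc del: funpow.simps)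
    finally show ?thesis .
  next
    case False
    then show ?thesis
      using gnn_layer_copy[where h = h and v = v, OF h[OF v] nf_bf_step_power_nonneg[OF G v] widths(1) assms(3,4) widths(2)]
      by (simp add: bf_gnn_layer_def Let_def)
  qed
qed

lemma gnn_eval_prefix_bf_gnn:
  assumes "in_graph_class \<beta> G" "1 \<le> d" "1 \<le> m"
  shows "v \<in> verts G \<Longrightarrow>
           foldl (\<lambda>h p. gnn_layer d G p h) (\<lambda>v. [nf G v]) (map (bf_gnn_layer L K d m) [0..<n]) v
             = lead_vec (bf_gnn_width L d n) (nf ((bf_step ^^ min n K) G) v)"
proof (induction n arbitrary: v)
  case 0
  then show ?case by (simp add: bf_gnn_width_def lead_vec_def)
next
  case (Suc n)
  then show ?case
    using gnn_layer_bf_gnn_layer[OF assms(1) Suc.prems assms(2,3)] Suc.IH by simp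
qed

lemma gnn_eval_bf_gnn:
  assumes "in_graph_class \<beta> G" "1 \<le> d" "1 \<le> m" "v \<in> verts G"
  shows "gnn_eval d G (bf_gnn L K d m) v = [nf ((bf_step ^^ min L K) G) v]"
  using gnn_eval_prefix_bf_gnn[OF assms]
  by (simp add: gnn_eval_def bf_gnn_def bf_gnn_width_def lead_vec_def)

theorem mainTheorem5:
  fixes L K m d :: nat and \<beta> :: real
  assumes "0 < K" and "K \<le> L" and "1 \<le> m" and "1 \<le> d" and "0 < \<beta>"
  shows "\<exists>\<theta>. gnn_shape L d m \<theta> \<and> gnn_biases_zero \<theta> \<and>
             gnn_nnz \<theta> = m * L + m * K + K \<and>
             (\<forall>G. in_graph_class \<beta> G \<longrightarrow>
                 (\<forall>v\<in>verts G. gnn_eval d G \<theta> v = [nf ((bf_step ^^ K) G) v]))"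
proof (intro exI conjI allI impI ballI)
  show "gnn_shape L d m (bf_gnn L K d m)"
    using assms(4) by (rule gnn_shape_bf_gnn)
  show "gnn_biases_zero (bf_gnn L K d m)"
    by (rule gnn_biases_zero_bf_gnn)
  show "gnn_nnz (bf_gnn L K d m) = m * L + m * K + K"
    using assms(2,3) by (rule gnn_nnz_bf_gnn)
  fix G v
  assume "in_graph_class \<beta> G" "v \<in> verts G"
  then show "gnn_eval d G (bf_gnn L K d m) v = [nf ((bf_step ^^ K) G) v]"
    using gnn_eval_bf_gnn[of \<beta> G d m v L K] assms(2-4) by (simp add: min_absorb2)
qed

end
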